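(* Let $w\in\mathcal W$, $u,\delta\in\mathcal X^*$ with $\|u\|_*\ne0$ and $\|u+\delta\|_*\ne0$, and $\eta>0$. Then $$\Big\langle u,P\Big(w,\frac{u+\delta}{\|u+\delta\|_*},\eta\Big)\Big\rangle\ge\frac14\Big\langle u,P\Big(w,\frac{u}{\|u\|_*},\frac\eta2\Big)\Big\rangle-2\|\delta\|_*.$$
   Context: $(\mathcal X,\|\cdot\|)$ is a reflexive Banach space with dual $(\mathcal X^*,\|\cdot\|_* )$, $\|u\|_*=\sup_{\|x\|\le1}\langle u,x\rangle$, and $\langle\cdot,\cdot\rangle$ the duality pairing. $\mathcal W\subseteq\mathcal X$ is nonempty, closed and convex. Mirror map: $\Phi:\mathcal D\to\mathbb R\cup\{+\infty\}$, $\mathcal D\subseteq\mathcal X$, proper, weakly lower semicontinuous, $1$-strongly convex on $\mathcal W\subseteq\mathrm{int}(\mathcal D)$ with respect to $\|\cdot\|$, and Gâteaux differentiable on $\mathcal W$. Bregman divergence $D_\Phi(x,y)=\Phi(x)-\Phi(y)-\langle\nabla\Phi(y),x-y\rangle$. Proximal gradient mapping: for $w\in\mathcal W$, $u\in\mathcal X^*$, $\eta>0$, $P(w,u,\eta)=(w-w^+)/\eta$ where $w^+=\arg\min_{w'\in\mathcal W}\{\langle\eta u,w'\rangle+D_\Phi(w',w)\}$ (this minimizer exists and is unique). *)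

theory Defs
  imports "HOL-Analysis.Analysis"
begin

(* The real Banach space X is a type 'a::banach; its dual X* is the type of
  bounded linear functionals 'a =>L real with the operator norm (which equals
  sup over the unit ball of the pairing). The duality pairing is application. *)

definition reflexive_space :: "'a::banach itself \<Rightarrow> bool" where
  "reflexive_space _ \<longleftrightarrow>
     (\<forall>\<phi> :: ('a \<Rightarrow>\<^sub>L real) \<Rightarrow>\<^sub>L real. \<exists>x::'a. \<forall>f. blinfun_apply \<phi> f = blinfun_apply f x)"

definition weak_open :: "'a::real_normed_vector set \<Rightarrow> bool" where
  "weak_open S \<longleftrightarrow>
     generate_topology {blinfun_apply f -` U | (f :: 'a \<Rightarrow>\<^sub>L real) U. open U} S"

definition weak_closed :: "'a::real_normed_vector set \<Rightarrow> bool" where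
  "weak_closed S \<longleftrightarrow> weak_open (- S)"

definition weakly_lsc_on :: "'a::real_normed_vector set \<Rightarrow> ('a \<Rightarrow> ereal) \<Rightarrow> bool" where
  "weakly_lsc_on D \<Phi> \<longleftrightarrow>
     (\<forall>t::ereal. \<exists>C. weak_closed C \<and> {x \<in> D. \<Phi> x \<le> t} = D \<inter> C)"

definition proper_on :: "'a set \<Rightarrow> ('a \<Rightarrow> ereal) \<Rightarrow> bool" where
  "proper_on D \<Phi> \<longleftrightarrow> (\<exists>x\<in>D. \<Phi> x < \<infinity>) \<and> (\<forall>x\<in>D. \<Phi> x > -\<infinity>)"

definition strongly_convex_on :: "'a::real_normed_vector set \<Rightarrow> ('a \<Rightarrow> ereal) \<Rightarrow> bool" where
  "strongly_convex_on W \<Phi> \<longleftrightarrow>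
     (\<forall>x\<in>W. \<forall>y\<in>W. \<forall>t::real. 0 \<le> t \<and> t \<le> 1 \<longrightarrow>
        \<Phi> ((1 - t) *\<^sub>R x + t *\<^sub>R y)
          \<le> ereal (1 - t) * \<Phi> x + ereal t * \<Phi> y - ereal (t * (1 - t) / 2 * (norm (x - y))\<^sup>2))"

definition has_gateaux_grad :: "('a::real_normed_vector \<Rightarrow> ereal) \<Rightarrow> ('a \<Rightarrow>\<^sub>L real) \<Rightarrow> 'a \<Rightarrow> bool" where
  "has_gateaux_grad \<Phi> g y \<longleftrightarrow>
     \<bar>\<Phi> y\<bar> \<noteq> \<infinity> \<and>
     (\<forall>h. (\<forall>\<^sub>F t in at (0::real). \<bar>\<Phi> (y + t *\<^sub>R h)\<bar> \<noteq> \<infinity>) \<and>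
          ((\<lambda>t. (real_of_ereal (\<Phi> (y + t *\<^sub>R h)) - real_of_ereal (\<Phi> y)) / t)
             \<longlongrightarrow> blinfun_apply g h) (at 0))"

definition mirror_map :: "'a::banach set \<Rightarrow> 'a set \<Rightarrow> ('a \<Rightarrow> ereal) \<Rightarrow> ('a \<Rightarrow> ('a \<Rightarrow>\<^sub>L real)) \<Rightarrow> bool" where
  "mirror_map W D \<Phi> grad \<longleftrightarrow>
     W \<noteq> {} \<and> closed W \<and> convex W \<and> W \<subseteq> interior D \<and>
     proper_on D \<Phi> \<and> weakly_lsc_on D \<Phi> \<and> strongly_convex_on W \<Phi> \<and>
     (\<forall>y\<in>W. has_gateaux_grad \<Phi> (grad y) y)"

definition bregman :: "('a::real_normed_vector \<Rightarrow> ereal) \<Rightarrow> ('a \<Rightarrow> ('a \<Rightarrow>\<^sub>L real)) \<Rightarrow> 'a \<Rightarrow> 'a \<Rightarrow> ereal" where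
  "bregman \<Phi> grad x y = \<Phi> x - \<Phi> y - ereal (blinfun_apply (grad y) (x - y))"

definition prox_step :: "'a::real_normed_vector set \<Rightarrow> ('a \<Rightarrow> ereal) \<Rightarrow> ('a \<Rightarrow> ('a \<Rightarrow>\<^sub>L real))
    \<Rightarrow> 'a \<Rightarrow> ('a \<Rightarrow>\<^sub>L real) \<Rightarrow> real \<Rightarrow> 'a" where
  "prox_step W \<Phi> grad w u \<eta> =
     (THE w'. w' \<in> W \<and> (\<forall>v\<in>W.
        ereal (\<eta> * blinfun_apply u w') + bregman \<Phi> grad w' w
          \<le> ereal (\<eta> * blinfun_apply u v) + bregman \<Phi> grad v w))"

definition prox_grad_map :: "'a::real_normed_vector set \<Rightarrow> ('a \<Rightarrow> ereal) \<Rightarrow> ('a \<Rightarrow> ('a \<Rightarrow>\<^sub>L real))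
    \<Rightarrow> 'a \<Rightarrow> ('a \<Rightarrow>\<^sub>L real) \<Rightarrow> real \<Rightarrow> 'a" where
  "prox_grad_map W \<Phi> grad w u \<eta> = (1 / \<eta>) *\<^sub>R (w - prox_step W \<Phi> grad w u \<eta>)"

end

theory Submission
  imports Defs
begin

(* The prox objective v |-> eta <g, v> + D(v, w) is 1-strongly convex on W. Hence it has a unique
   minimiser x+, and it exceeds its minimum by at least |v - x+|^2 / 2. In particular
   D(x+, w) <= eta <g, w - x+> and |w - x+| <= eta |g|.

   Let x1 and x2 be the steps for (u + delta) / |u + delta| with eta and for u / |u| with eta / 2.
   Testing the minimality of x1 at x2 and multiplying by r = |u + delta| gives
     eta <u, w - x1> >= eta <u, w - x2> + eta <delta, x1 - x2> - r D(x2, w),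
   and the descent of x2 gives |u| D(x2, w) <= eta <u, w - x2> / 2 and D(x2, w) <= eta^2 / 4.
   With r <= |u| + |delta|, |w - x1| <= eta and |w - x2| <= eta / 2 this yields
   <u, w - x1> >= <u, w - x2> / 2 - 7/4 eta |delta|, and dividing by eta gives the claim. *)

lemma weak_open_imp_open: "weak_open S \<Longrightarrow> open S"
  unfolding weak_open_def
proof (induction rule: generate_topology.induct)
  case (Basis s)
  then obtain f U where "s = blinfun_apply (f :: 'a \<Rightarrow>\<^sub>L real) -` U" "open U" by auto
  then show ?case
    by (auto intro!: continuous_open_vimage linear_continuous_at blinfun.bounded_linear_right)
qed auto

lemma weak_closed_imp_closed: "weak_closed C \<Longrightarrow> closed C"
  unfolding weak_closed_def closed_def by (rule weak_open_imp_open)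

definition strongly_convex_real_on :: "'a::real_normed_vector set \<Rightarrow> ('a \<Rightarrow> real) \<Rightarrow> bool" where
  "strongly_convex_real_on W f \<longleftrightarrow>
     (\<forall>x\<in>W. \<forall>y\<in>W. \<forall>t. 0 \<le> t \<and> t \<le> 1 \<longrightarrow>
        f ((1 - t) *\<^sub>R x + t *\<^sub>R y) \<le> (1 - t) * f x + t * f y - t * (1 - t) / 2 * (norm (x - y))\<^sup>2)"

text \<open>Only sequences along which the values converge are constrained; this is weaker than
  the usual liminf condition, but it is all that minimisation needs.\<close>
definition seq_lsc_on :: "'a::topological_space set \<Rightarrow> ('a \<Rightarrow> real) \<Rightarrow> bool" where
  "seq_lsc_on W f \<longleftrightarrow>
     (\<forall>X l c. (\<forall>n. X n \<in> W) \<and> X \<longlonglongrightarrow> l \<and> l \<in> W \<and> (\<lambda>n. f (X n)) \<longlonglongrightarrow> c \<longrightarrow> f l \<le> c)"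

lemma strongly_convex_real_on_add_blinfun:
  assumes "strongly_convex_real_on W f"
  shows "strongly_convex_real_on W (\<lambda>x. f x + blinfun_apply L x + c)"
  unfolding strongly_convex_real_on_def
proof (intro ballI allI impI)
  fix x y and t :: real assume "x \<in> W" "y \<in> W" "0 \<le> t \<and> t \<le> 1"
  then have "f ((1 - t) *\<^sub>R x + t *\<^sub>R y) \<le> (1 - t) * f x + t * f y - t * (1 - t) / 2 * (norm (x - y))\<^sup>2"
    using assms unfolding strongly_convex_real_on_def by blast
  moreover have "blinfun_apply L ((1 - t) *\<^sub>R x + t *\<^sub>R y) = (1 - t) * blinfun_apply L x + t * blinfun_apply L y"
    by (simp add: blinfun.add_right blinfun.scaleR_right)
  ultimately show "f ((1 - t) *\<^sub>R x + t *\<^sub>R y) + blinfun_apply L ((1 - t) *\<^sub>R x + t *\<^sub>R y) + c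
      \<le> (1 - t) * (f x + blinfun_apply L x + c) + t * (f y + blinfun_apply L y + c)
        - t * (1 - t) / 2 * (norm (x - y))\<^sup>2"
    by (simp add: algebra_simps)
qed

lemma seq_lsc_on_add_continuous:
  fixes f h :: "'a::metric_space \<Rightarrow> real"
  assumes "seq_lsc_on W f" and "continuous_on W h"
  shows "seq_lsc_on W (\<lambda>x. f x + h x)"
  unfolding seq_lsc_on_def
proof (intro allI impI, elim conjE)
  fix X l c assume X: "\<forall>n. X n \<in> W" and lim: "X \<longlonglongrightarrow> l" and l: "l \<in> W"
    and c: "(\<lambda>n. f (X n) + h (X n)) \<longlonglongrightarrow> c"
  have "(\<lambda>n. h (X n)) \<longlonglongrightarrow> h l"
    using assms(2) X lim l unfolding continuous_on_sequentially comp_def by blast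
  from tendsto_diff[OF c this] have "(\<lambda>n. f (X n)) \<longlonglongrightarrow> c - h l"
    by simp
  then have "f l \<le> c - h l"
    using assms(1) X lim l unfolding seq_lsc_on_def by blast
  then show "f l + h l \<le> c" by simp
qed

lemma strongly_convex_real_on_chord:
  assumes "strongly_convex_real_on W f" "x \<in> W" "y \<in> W" "0 \<le> t" "t \<le> 1"
  shows "f (x + t *\<^sub>R (y - x)) \<le> f x + t * (f y - f x - (1 - t) / 2 * (norm (y - x))\<^sup>2)"
proof -
  have "x + t *\<^sub>R (y - x) = (1 - t) *\<^sub>R x + t *\<^sub>R y" by (simp add: algebra_simps)
  then show ?thesis
    using assms unfolding strongly_convex_real_on_def
    by (fastforce simp: algebra_simps norm_minus_commute)
qed

lemma strongly_convex_real_on_min_growth: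
  assumes "convex W" "strongly_convex_real_on W f" "x \<in> W" "\<forall>v\<in>W. f x \<le> f v" "y \<in> W"
  shows "f x + (norm (y - x))\<^sup>2 / 2 \<le> f y"
proof -
  have "((\<lambda>t. f y - f x - (1 - t) / 2 * (norm (y - x))\<^sup>2)
      \<longlongrightarrow> f y - f x - (1 - 0) / 2 * (norm (y - x))\<^sup>2) (at_right 0)"
    by (intro tendsto_intros) simp_all
  moreover have "\<forall>\<^sub>F t in at_right 0. 0 \<le> f y - f x - (1 - t) / 2 * (norm (y - x))\<^sup>2"
    unfolding eventually_at_right_field
  proof (intro exI[of _ 1] conjI allI impI)
    fix t :: real assume t: "0 < t" "t < 1"
    have "x + t *\<^sub>R (y - x) = (1 - t) *\<^sub>R x + t *\<^sub>R y" by (simp add: algebra_simps)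
    then have "x + t *\<^sub>R (y - x) \<in> W"
      using assms(1,3,5) t by (simp add: convexD)
    then have "f x \<le> f x + t * (f y - f x - (1 - t) / 2 * (norm (y - x))\<^sup>2)"
      using assms(4) strongly_convex_real_on_chord[OF assms(2,3,5), of t] t by force
    then show "0 \<le> f y - f x - (1 - t) / 2 * (norm (y - x))\<^sup>2"
      using t by (simp add: zero_le_mult_iff)
  qed simp
  ultimately show ?thesis
    using tendsto_lowerbound[of _ _ "at_right (0::real)"] by fastforce
qed

lemma strongly_convex_real_on_gradient_ineq:
  assumes "strongly_convex_real_on W f" "x \<in> W" "y \<in> W"
    and deriv: "((\<lambda>t. (f (x + t *\<^sub>R (y - x)) - f x) / t) \<longlongrightarrow> L) (at_right 0)"
  shows "f x + L + (norm (y - x))\<^sup>2 / 2 \<le> f y"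
proof -
  have "((\<lambda>t. f y - f x - (1 - t) / 2 * (norm (y - x))\<^sup>2)
      \<longlongrightarrow> f y - f x - (1 - 0) / 2 * (norm (y - x))\<^sup>2) (at_right 0)"
    by (intro tendsto_intros) simp_all
  moreover have "\<forall>\<^sub>F t in at_right 0.
      (f (x + t *\<^sub>R (y - x)) - f x) / t \<le> f y - f x - (1 - t) / 2 * (norm (y - x))\<^sup>2"
    unfolding eventually_at_right_field
  proof (intro exI[of _ 1] conjI allI impI)
    fix t :: real assume t: "0 < t" "t < 1"
    then show "(f (x + t *\<^sub>R (y - x)) - f x) / t \<le> f y - f x - (1 - t) / 2 * (norm (y - x))\<^sup>2"
      using strongly_convex_real_on_chord[OF assms(1-3), of t] by (simp add: divide_le_eq mult.commute)
  qed simp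
  ultimately have "L \<le> f y - f x - (1 - 0) / 2 * (norm (y - x))\<^sup>2"
    using tendsto_le[OF trivial_limit_at_right_real] deriv by blast
  then show ?thesis by simp
qed

lemma strongly_convex_real_on_midpoint_dist:
  assumes "convex W" "strongly_convex_real_on W f" "\<forall>v\<in>W. m \<le> f v" "x \<in> W" "y \<in> W"
  shows "(norm (x - y))\<^sup>2 \<le> 4 * ((f x - m) + (f y - m))"
proof -
  have sc: "\<And>t. 0 \<le> t \<Longrightarrow> t \<le> 1 \<Longrightarrow>
      f ((1 - t) *\<^sub>R x + t *\<^sub>R y) \<le> (1 - t) * f x + t * f y - t * (1 - t) / 2 * (norm (x - y))\<^sup>2"
    using assms(2,4,5) unfolding strongly_convex_real_on_def by blast
  have "(1 - 1/2) *\<^sub>R x + (1/2) *\<^sub>R y \<in> W"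
    using assms(1,4,5) by (rule convexD) auto
  then have "m \<le> f ((1 - 1/2) *\<^sub>R x + (1/2) *\<^sub>R y)"
    using assms(3) by blast
  also have "\<dots> \<le> (1 - 1/2) * f x + (1/2) * f y - (1/2) * (1 - 1/2) / 2 * (norm (x - y))\<^sup>2"
    by (rule sc) simp_all
  finally show ?thesis by simp
qed

lemma strongly_convex_real_on_has_min:
  fixes f :: "'a::banach \<Rightarrow> real"
  assumes "convex W" "closed W" "W \<noteq> {}" "strongly_convex_real_on W f" "seq_lsc_on W f"
    and "bdd_below (f ` W)"
  shows "\<exists>x\<in>W. \<forall>v\<in>W. f x \<le> f v"
proof -
  define m where "m = Inf (f ` W)"
  have m_le: "\<forall>v\<in>W. m \<le> f v"
    unfolding m_def using assms(6) by (simp add: cInf_lower)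
  have "m \<in> closure (f ` W)"
    unfolding m_def using assms(3,6) by (simp add: closure_contains_Inf)
  then obtain y where y: "\<forall>n. y n \<in> f ` W" and "y \<longlonglongrightarrow> m"
    unfolding closure_sequential by blast
  moreover from y have "\<forall>n. \<exists>x. x \<in> W \<and> f x = y n" by (metis imageE)
  then obtain X where X: "\<And>n. X n \<in> W" and "\<And>n. f (X n) = y n" by metis
  ultimately have fX: "(\<lambda>n. f (X n)) \<longlonglongrightarrow> m" by simp
  have "Cauchy X"
  proof (rule metric_CauchyI)
    fix e :: real assume "e > 0"
    then have "\<forall>\<^sub>F n in sequentially. f (X n) < m + e\<^sup>2 / 8"
      using order_tendstoD(2)[OF fX, of "m + e\<^sup>2 / 8"] \<open>e > 0\<close> by simp
    then obtain N where N: "\<And>n. n \<ge> N \<Longrightarrow> f (X n) < m + e\<^sup>2 / 8"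
      unfolding eventually_sequentially by blast
    have "dist (X n) (X k) < e" if "n \<ge> N" "k \<ge> N" for n k
    proof -
      have "(norm (X n - X k))\<^sup>2 \<le> 4 * ((f (X n) - m) + (f (X k) - m))"
        by (rule strongly_convex_real_on_midpoint_dist[OF assms(1,4) m_le X X])
      also have "\<dots> < e\<^sup>2"
        using N[OF that(1)] N[OF that(2)] by argo
      finally have "(dist (X n) (X k))\<^sup>2 < e\<^sup>2"
        by (simp add: dist_norm)
      then show ?thesis using \<open>e > 0\<close> by (simp add: power_less_imp_less_base)
    qed
    then show "\<exists>N. \<forall>n\<ge>N. \<forall>k\<ge>N. dist (X n) (X k) < e" by blast
  qed
  then obtain l where l: "X \<longlonglongrightarrow> l"
    using Cauchy_convergent_iff convergent_def by blast
  have "l \<in> W"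
    using closed_sequentially[OF assms(2)] X l by blast
  moreover have "f l \<le> m"
    using assms(5) X l fX \<open>l \<in> W\<close> unfolding seq_lsc_on_def by blast
  ultimately show ?thesis using m_le by (meson order_trans)
qed

definition bregman_real :: "('a::real_normed_vector \<Rightarrow> ereal) \<Rightarrow> ('a \<Rightarrow> ('a \<Rightarrow>\<^sub>L real)) \<Rightarrow> 'a \<Rightarrow> 'a \<Rightarrow> real" where
  "bregman_real \<Phi> grad x y =
     real_of_ereal (\<Phi> x) - real_of_ereal (\<Phi> y) - blinfun_apply (grad y) (x - y)"

lemma prox_objective_eq:
  "(\<lambda>v. \<eta> * blinfun_apply g v + bregman_real \<Phi> grad v w)
     = (\<lambda>v. real_of_ereal (\<Phi> v) + blinfun_apply (\<eta> *\<^sub>R g - grad w) v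
            + (blinfun_apply (grad w) w - real_of_ereal (\<Phi> w)))"
  by (simp add: bregman_real_def blinfun.diff_left blinfun.diff_right blinfun.scaleR_left algebra_simps)

context
  fixes W D :: "'a::banach set" and \<Phi> :: "'a \<Rightarrow> ereal" and grad :: "'a \<Rightarrow> ('a \<Rightarrow>\<^sub>L real)"
  assumes mirror: "mirror_map W D \<Phi> grad"
begin

lemma mirror_map_convex: "convex W"
  and mirror_map_closed: "closed W"
  and mirror_map_nonempty: "W \<noteq> {}"
  using mirror unfolding mirror_map_def by auto

lemma mirror_map_finite: "x \<in> W \<Longrightarrow> \<Phi> x = ereal (real_of_ereal (\<Phi> x))"
  using mirror unfolding mirror_map_def has_gateaux_grad_def by (metis ereal_real)

lemma mirror_map_strongly_convex_real: "strongly_convex_real_on W (\<lambda>x. real_of_ereal (\<Phi> x))"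
  unfolding strongly_convex_real_on_def
proof (intro ballI allI impI)
  fix x y and t :: real assume x: "x \<in> W" and y: "y \<in> W" and t: "0 \<le> t \<and> t \<le> 1"
  let ?z = "(1 - t) *\<^sub>R x + t *\<^sub>R y"
  have z: "?z \<in> W"
    using mirror_map_convex x y t by (simp add: convexD)
  have "\<Phi> ?z \<le> ereal (1 - t) * \<Phi> x + ereal t * \<Phi> y - ereal (t * (1 - t) / 2 * (norm (x - y))\<^sup>2)"
    using mirror x y t unfolding mirror_map_def strongly_convex_on_def by blast
  then show "real_of_ereal (\<Phi> ?z)
      \<le> (1 - t) * real_of_ereal (\<Phi> x) + t * real_of_ereal (\<Phi> y) - t * (1 - t) / 2 * (norm (x - y))\<^sup>2"
    by (subst (asm) mirror_map_finite[OF z], subst (asm) mirror_map_finite[OF x],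
        subst (asm) mirror_map_finite[OF y]) simp
qed

lemma mirror_map_seq_lsc: "seq_lsc_on W (\<lambda>x. real_of_ereal (\<Phi> x))"
  unfolding seq_lsc_on_def
proof (intro allI impI, elim conjE)
  fix X l c assume X: "\<forall>n. X n \<in> W" and lim: "X \<longlonglongrightarrow> l" and l: "l \<in> W"
    and c: "(\<lambda>n. real_of_ereal (\<Phi> (X n))) \<longlonglongrightarrow> c"
  have WD: "W \<subseteq> D"
    using mirror interior_subset unfolding mirror_map_def by blast
  show "real_of_ereal (\<Phi> l) \<le> c"
  proof (rule field_le_epsilon)
    fix e :: real assume "e > 0"
    obtain C where C: "weak_closed C" "{x \<in> D. \<Phi> x \<le> ereal (c + e)} = D \<inter> C"
      using mirror unfolding mirror_map_def weakly_lsc_on_def by blast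
    have "\<forall>\<^sub>F n in sequentially. real_of_ereal (\<Phi> (X n)) < c + e"
      using order_tendstoD(2)[OF c] \<open>e > 0\<close> by simp
    then have "\<forall>\<^sub>F n in sequentially. X n \<in> C"
    proof eventually_elim
      case (elim n)
      then have "\<Phi> (X n) \<le> ereal (c + e)"
        using mirror_map_finite[of "X n"] X by (metis ereal_less_eq(3) less_imp_le)
      then show "X n \<in> C" using C(2) X WD by blast
    qed
    then have "l \<in> C"
      using Lim_in_closed_set[OF weak_closed_imp_closed[OF C(1)] _ _ lim] by simp
    then have "\<Phi> l \<le> ereal (c + e)"
      using C(2) l WD by blast
    then show "real_of_ereal (\<Phi> l) \<le> c + e"
      using mirror_map_finite[OF l] by (metis ereal_less_eq(3))
  qed
qed

lemma bregman_eq_ereal: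
  "x \<in> W \<Longrightarrow> y \<in> W \<Longrightarrow> bregman \<Phi> grad x y = ereal (bregman_real \<Phi> grad x y)"
  unfolding bregman_def bregman_real_def
  by (subst mirror_map_finite, assumption, subst (2) mirror_map_finite, assumption) simp

lemma bregman_real_ge:
  assumes x: "x \<in> W" and y: "y \<in> W"
  shows "(norm (x - y))\<^sup>2 / 2 \<le> bregman_real \<Phi> grad x y"
proof -
  have "((\<lambda>t. (real_of_ereal (\<Phi> (y + t *\<^sub>R (x - y))) - real_of_ereal (\<Phi> y)) / t)
      \<longlongrightarrow> blinfun_apply (grad y) (x - y)) (at 0)"
    using mirror y unfolding mirror_map_def has_gateaux_grad_def by blast
  then have "((\<lambda>t. (real_of_ereal (\<Phi> (y + t *\<^sub>R (x - y))) - real_of_ereal (\<Phi> y)) / t)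
      \<longlongrightarrow> blinfun_apply (grad y) (x - y)) (at_right 0)"
    by (rule filterlim_mono) (simp_all add: at_le)
  from strongly_convex_real_on_gradient_ineq[OF mirror_map_strongly_convex_real y x this]
  show ?thesis
    unfolding bregman_real_def by linarith
qed

lemma bregman_real_nonneg: "x \<in> W \<Longrightarrow> y \<in> W \<Longrightarrow> 0 \<le> bregman_real \<Phi> grad x y"
  using bregman_real_ge[of x y] zero_le_power2[of "norm (x - y)"] by linarith

lemma prox_objective_strongly_convex:
  "strongly_convex_real_on W (\<lambda>v. \<eta> * blinfun_apply g v + bregman_real \<Phi> grad v w)"
  unfolding prox_objective_eq
  by (rule strongly_convex_real_on_add_blinfun[OF mirror_map_strongly_convex_real])

lemma prox_objective_seq_lsc:
  "seq_lsc_on W (\<lambda>v. \<eta> * blinfun_apply g v + bregman_real \<Phi> grad v w)"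
  unfolding prox_objective_eq add.assoc
  by (intro seq_lsc_on_add_continuous[OF mirror_map_seq_lsc] continuous_intros)

lemma prox_objective_bdd_below:
  assumes w: "w \<in> W" and v: "v \<in> W"
  shows "\<eta> * blinfun_apply g w - (norm (\<eta> *\<^sub>R g))\<^sup>2 / 2
    \<le> \<eta> * blinfun_apply g v + bregman_real \<Phi> grad v w"
proof -
  let ?N = "norm (\<eta> *\<^sub>R g)" and ?d = "norm (v - w)"
  have "- (?N * ?d) \<le> blinfun_apply (\<eta> *\<^sub>R g) (v - w)"
    using norm_blinfun[of "\<eta> *\<^sub>R g" "v - w"] by (simp add: abs_le_iff)
  also have "\<dots> = \<eta> * blinfun_apply g v - \<eta> * blinfun_apply g w"
    by (simp add: blinfun.diff_right blinfun.scaleR_left right_diff_distrib)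
  finally have "- (?N * ?d) \<le> \<eta> * blinfun_apply g v - \<eta> * blinfun_apply g w" .
  moreover have "0 \<le> (?d - ?N)\<^sup>2" by simp
  moreover have "(?d - ?N)\<^sup>2 = ?d\<^sup>2 - 2 * (?N * ?d) + ?N\<^sup>2"
    by (simp add: power2_eq_square algebra_simps)
  ultimately show ?thesis
    using bregman_real_ge[OF v w] by linarith
qed

lemma prox_objective_has_min:
  assumes "w \<in> W"
  shows "\<exists>x\<in>W. \<forall>v\<in>W. \<eta> * blinfun_apply g x + bregman_real \<Phi> grad x w
                      \<le> \<eta> * blinfun_apply g v + bregman_real \<Phi> grad v w"
proof (rule strongly_convex_real_on_has_min[OF mirror_map_convex mirror_map_closed mirror_map_nonempty
      prox_objective_strongly_convex prox_objective_seq_lsc])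
  show "bdd_below ((\<lambda>v. \<eta> * blinfun_apply g v + bregman_real \<Phi> grad v w) ` W)"
    using prox_objective_bdd_below[OF assms] by (rule bdd_belowI2)
qed

lemma prox_step_eq_argmin:
  assumes w: "w \<in> W" and x: "x \<in> W"
    and min: "\<forall>v\<in>W. \<eta> * blinfun_apply g x + bregman_real \<Phi> grad x w
                   \<le> \<eta> * blinfun_apply g v + bregman_real \<Phi> grad v w"
  shows "prox_step W \<Phi> grad w g \<eta> = x"
  unfolding prox_step_def
proof (rule the_equality)
  show "x \<in> W \<and> (\<forall>v\<in>W. ereal (\<eta> * blinfun_apply g x) + bregman \<Phi> grad x w
                         \<le> ereal (\<eta> * blinfun_apply g v) + bregman \<Phi> grad v w)"
    using x min w by (simp add: bregman_eq_ereal)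
next
  fix y assume "y \<in> W \<and> (\<forall>v\<in>W. ereal (\<eta> * blinfun_apply g y) + bregman \<Phi> grad y w
                            \<le> ereal (\<eta> * blinfun_apply g v) + bregman \<Phi> grad v w)"
  then have y: "y \<in> W" and y_min: "\<forall>v\<in>W. \<eta> * blinfun_apply g y + bregman_real \<Phi> grad y w
                                 \<le> \<eta> * blinfun_apply g v + bregman_real \<Phi> grad v w"
    using w by (auto simp: bregman_eq_ereal)
  from strongly_convex_real_on_min_growth[OF mirror_map_convex prox_objective_strongly_convex y y_min x]
  have "(norm (x - y))\<^sup>2 \<le> 0"
    using bspec[OF min y] by linarith
  then show "y = x" by simp
qed

lemma prox_step_in:
  assumes "w \<in> W"
  shows "prox_step W \<Phi> grad w g \<eta> \<in> W"
proof -
  obtain x where "x \<in> W" and "\<forall>v\<in>W. \<eta> * blinfun_apply g x + bregman_real \<Phi> grad x w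
                                   \<le> \<eta> * blinfun_apply g v + bregman_real \<Phi> grad v w"
    using prox_objective_has_min[OF assms] by blast
  with prox_step_eq_argmin[OF assms] show ?thesis by simp
qed

lemma prox_step_le:
  assumes "w \<in> W" "v \<in> W"
  shows "\<eta> * blinfun_apply g (prox_step W \<Phi> grad w g \<eta>) + bregman_real \<Phi> grad (prox_step W \<Phi> grad w g \<eta>) w
           + (norm (v - prox_step W \<Phi> grad w g \<eta>))\<^sup>2 / 2
         \<le> \<eta> * blinfun_apply g v + bregman_real \<Phi> grad v w"
proof -
  obtain x where x: "x \<in> W" and min: "\<forall>v\<in>W. \<eta> * blinfun_apply g x + bregman_real \<Phi> grad x w
                                               \<le> \<eta> * blinfun_apply g v + bregman_real \<Phi> grad v w"
    using prox_objective_has_min[OF assms(1)] by blast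
  show ?thesis
    unfolding prox_step_eq_argmin[OF assms(1) x min]
    by (rule strongly_convex_real_on_min_growth[OF mirror_map_convex prox_objective_strongly_convex x min assms(2)])
qed

lemma prox_step_descent:
  assumes "w \<in> W"
  shows "bregman_real \<Phi> grad (prox_step W \<Phi> grad w g \<eta>) w + (norm (w - prox_step W \<Phi> grad w g \<eta>))\<^sup>2 / 2
    \<le> \<eta> * blinfun_apply g (w - prox_step W \<Phi> grad w g \<eta>)"
  using prox_step_le[OF assms assms, of \<eta> g]
  by (simp add: bregman_real_def blinfun.diff_right algebra_simps)

lemma prox_step_dist_le:
  assumes "w \<in> W" "0 \<le> \<eta>"
  shows "norm (w - prox_step W \<Phi> grad w g \<eta>) \<le> \<eta> * norm g"
proof -
  let ?d = "norm (w - prox_step W \<Phi> grad w g \<eta>)"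
  have "?d\<^sup>2 \<le> \<eta> * blinfun_apply g (w - prox_step W \<Phi> grad w g \<eta>)"
    using prox_step_descent[OF assms(1), of g \<eta>] bregman_real_ge[OF prox_step_in[OF assms(1)] assms(1), of g \<eta>]
    by (simp add: norm_minus_commute)
  also have "\<dots> \<le> \<eta> * (norm g * ?d)"
    using norm_blinfun[of g "w - prox_step W \<Phi> grad w g \<eta>"] assms(2)
    by (intro mult_left_mono) auto
  finally have "?d * ?d \<le> (\<eta> * norm g) * ?d"
    by (simp add: power2_eq_square algebra_simps)
  then show ?thesis
    by (cases "?d = 0") (use assms(2) in \<open>auto simp: mult_le_cancel_right\<close>)
qed

lemma prox_step_pairing_le:
  assumes "w \<in> W" "0 \<le> \<eta>"
  shows "\<bar>blinfun_apply f (w - prox_step W \<Phi> grad w g \<eta>)\<bar> \<le> norm f * (\<eta> * norm g)"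
  using order_trans[OF norm_blinfun mult_left_mono[OF prox_step_dist_le[OF assms] norm_ge_zero], of f g] by simp

lemma prox_step_le_linear:
  assumes "w \<in> W" "v \<in> W"
  shows "\<eta> * blinfun_apply g (prox_step W \<Phi> grad w g \<eta>) \<le> \<eta> * blinfun_apply g v + bregman_real \<Phi> grad v w"
  using prox_step_le[OF assms, of \<eta> g] bregman_real_nonneg[OF prox_step_in[OF assms(1)] assms(1), of g \<eta>]
    zero_le_power2[of "norm (v - prox_step W \<Phi> grad w g \<eta>)"]
  by linarith

lemma prox_step_bregman_le:
  assumes "w \<in> W"
  shows "bregman_real \<Phi> grad (prox_step W \<Phi> grad w g \<eta>) w \<le> \<eta> * blinfun_apply g (w - prox_step W \<Phi> grad w g \<eta>)"
  using prox_step_descent[OF assms, of g \<eta>] zero_le_power2[of "norm (w - prox_step W \<Phi> grad w g \<eta>)"]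
  by linarith

lemma prox_step_bregman_le_sq:
  assumes "w \<in> W" "0 \<le> \<eta>"
  shows "bregman_real \<Phi> grad (prox_step W \<Phi> grad w g \<eta>) w \<le> (\<eta> * norm g)\<^sup>2"
proof -
  have "blinfun_apply g (w - prox_step W \<Phi> grad w g \<eta>) \<le> norm g * (\<eta> * norm g)"
    using prox_step_pairing_le[OF assms, of g g] by (simp add: abs_le_iff)
  then have "\<eta> * blinfun_apply g (w - prox_step W \<Phi> grad w g \<eta>) \<le> \<eta> * (norm g * (\<eta> * norm g))"
    using assms(2) by (simp add: mult_left_mono)
  with prox_step_bregman_le[OF assms(1), of g \<eta>] show ?thesis
    by (simp add: power2_eq_square algebra_simps)
qed

lemma prox_step_normalized_perturbation:
  fixes u \<delta> :: "'a \<Rightarrow>\<^sub>L real"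
  assumes w: "w \<in> W" and \<eta>: "0 < \<eta>" and u: "u \<noteq> 0" and u\<delta>: "u + \<delta> \<noteq> 0"
  defines "x1 \<equiv> prox_step W \<Phi> grad w ((1 / norm (u + \<delta>)) *\<^sub>R (u + \<delta>)) \<eta>"
    and "x2 \<equiv> prox_step W \<Phi> grad w ((1 / norm u) *\<^sub>R u) (\<eta> / 2)"
  shows "blinfun_apply u (w - x2) / 2 - 2 * \<eta> * norm \<delta> \<le> blinfun_apply u (w - x1)"
proof -
  define r s where "r = norm (u + \<delta>)" and "s = norm u"
  have r: "0 < r" and s: "0 < s" using u u\<delta> unfolding r_def s_def by auto
  define a A D2 where "a = blinfun_apply u (w - x1)" and "A = blinfun_apply u (w - x2)"
    and "D2 = bregman_real \<Phi> grad x2 w"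
  have x2: "x2 \<in> W"
    unfolding x2_def using w by (rule prox_step_in)
  have "\<eta> * (blinfun_apply (u + \<delta>) x1 / r) \<le> \<eta> * (blinfun_apply (u + \<delta>) x2 / r) + D2"
    using prox_step_le_linear[OF w x2, of \<eta> "(1 / r) *\<^sub>R (u + \<delta>)"]
    unfolding x1_def r_def D2_def by (simp add: blinfun.scaleR_left)
  then have "\<eta> * blinfun_apply (u + \<delta>) x1 \<le> \<eta> * blinfun_apply (u + \<delta>) x2 + r * D2"
    using r by (simp add: field_simps)
  then have compare: "\<eta> * a \<ge> \<eta> * A + \<eta> * blinfun_apply \<delta> (x1 - x2) - r * D2"
    unfolding a_def A_def by (simp add: blinfun.add_left blinfun.diff_right algebra_simps)
  have "D2 \<le> \<eta> / 2 * (A / s)"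
    using prox_step_bregman_le[OF w, of "(1 / s) *\<^sub>R u" "\<eta> / 2"]
    unfolding D2_def A_def x2_def s_def by (simp add: blinfun.scaleR_left)
  then have "s * D2 \<le> \<eta> * A / 2"
    using s by (simp add: field_simps)
  moreover have "D2 \<le> \<eta>\<^sup>2 / 4"
    using prox_step_bregman_le_sq[OF w, of "\<eta> / 2" "(1 / s) *\<^sub>R u"] \<eta> s
    unfolding D2_def x2_def s_def by (simp add: power_divide)
  ultimately have rD2: "r * D2 \<le> \<eta> * A / 2 + norm \<delta> * (\<eta>\<^sup>2 / 4)"
    using mult_right_mono[OF norm_triangle_ineq[of u \<delta>] bregman_real_nonneg[OF x2 w]]
      mult_left_mono[of D2 "\<eta>\<^sup>2 / 4" "norm \<delta>"]
    unfolding r_def s_def D2_def by (simp add: distrib_right)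
  have "\<bar>blinfun_apply \<delta> (w - x1)\<bar> \<le> norm \<delta> * \<eta>"
    using prox_step_pairing_le[OF w, of \<eta> \<delta> "(1 / r) *\<^sub>R (u + \<delta>)"] \<eta> r unfolding x1_def r_def by simp
  moreover have "\<bar>blinfun_apply \<delta> (w - x2)\<bar> \<le> norm \<delta> * (\<eta> / 2)"
    using prox_step_pairing_le[OF w, of "\<eta> / 2" \<delta> "(1 / s) *\<^sub>R u"] \<eta> s unfolding x2_def s_def by simp
  ultimately have "blinfun_apply \<delta> (x1 - x2) \<ge> - (3 / 2 * (norm \<delta> * \<eta>))"
    unfolding abs_le_iff blinfun.diff_right by linarith
  then have perturbation: "\<eta> * blinfun_apply \<delta> (x1 - x2) \<ge> - (3 / 2 * (norm \<delta> * \<eta>\<^sup>2))"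
    using mult_left_mono[of "- (3 / 2 * (norm \<delta> * \<eta>))" "blinfun_apply \<delta> (x1 - x2)" \<eta>] \<eta>
    by (simp add: power2_eq_square algebra_simps)
  from compare rD2 perturbation have "\<eta> * a \<ge> \<eta> * (A / 2 - 7 / 4 * (\<eta> * norm \<delta>))"
    by (simp add: power2_eq_square algebra_simps)
  then have "a \<ge> A / 2 - 7 / 4 * (\<eta> * norm \<delta>)"
    using \<eta> by simp
  moreover have "0 \<le> \<eta> * norm \<delta>"
    using \<eta> by simp
  ultimately show ?thesis
    unfolding a_def A_def by linarith
qed

end

theorem mainTheorem8:
  fixes W D :: "'a::banach set" and \<Phi> :: "'a \<Rightarrow> ereal"
    and grad :: "'a \<Rightarrow> ('a \<Rightarrow>\<^sub>L real)"
    and w :: 'a and u \<delta> :: "'a \<Rightarrow>\<^sub>L real" and \<eta> :: real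
  assumes "reflexive_space TYPE('a)"
    and "mirror_map W D \<Phi> grad"
    and "w \<in> W"
    and "norm u \<noteq> 0" and "norm (u + \<delta>) \<noteq> 0"
    and "\<eta> > 0"
  shows "blinfun_apply u (prox_grad_map W \<Phi> grad w ((1 / norm (u + \<delta>)) *\<^sub>R (u + \<delta>)) \<eta>)
         \<ge> 1/4 * blinfun_apply u (prox_grad_map W \<Phi> grad w ((1 / norm u) *\<^sub>R u) (\<eta> / 2))
           - 2 * norm \<delta>"
proof -
  define x1 where "x1 = prox_step W \<Phi> grad w ((1 / norm (u + \<delta>)) *\<^sub>R (u + \<delta>)) \<eta>"
  define x2 where "x2 = prox_step W \<Phi> grad w ((1 / norm u) *\<^sub>R u) (\<eta> / 2)"
  have "blinfun_apply u (w - x2) / 2 - 2 * \<eta> * norm \<delta> \<le> blinfun_apply u (w - x1)"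
    unfolding x1_def x2_def using assms(4,5)
    by (intro prox_step_normalized_perturbation[OF assms(2,3,6)]) auto
  then have "(blinfun_apply u (w - x2) / 2 - 2 * \<eta> * norm \<delta>) / \<eta> \<le> blinfun_apply u (w - x1) / \<eta>"
    using assms(6) by (simp add: divide_right_mono)
  moreover have "(blinfun_apply u (w - x2) / 2 - 2 * \<eta> * norm \<delta>) / \<eta>
      = 1/4 * (2 * blinfun_apply u (w - x2) / \<eta>) - 2 * norm \<delta>"
    using assms(6) by (simp add: field_simps)
  ultimately show ?thesis
    unfolding prox_grad_map_def x1_def x2_def by (simp add: blinfun.scaleR_right)
qed

end
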